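(* Let $p>3$ be prime, $t\in\{1,3,p,3p\}$, and $1\le r\le 3p-1$ with $\gcd(r,3p)=1$. Then \[\mathcal{S}(3,r,t)=\begin{cases}3(|r|_p-1) & \text{if } r\equiv1\pmod3\text{ and } t\in\{3,3p\},\\ 3(|r|_p-1) & \text{if } r\equiv 1\pmod 3,\ t\in\{1,p\}\text{ and } 3\nmid|r|_p,\\ |r|_p-3 & \text{if } r\equiv 1\pmod 3,\ t\in\{1,p\}\text{ and } 3\mid |r|_p,\\ 3(|r|_p-1) & \text{if } r\equiv 2\pmod 3\text{ and } |r|_p\text{ is odd},\\ 3\left(\frac{|r|_p}{2}-1\right) & \text{if } r\equiv 2\pmod 3\text{ and }|r|_p\text{ is even}.\end{cases}\]
   Context: $|r|_m$ is the multiplicative order of $r$ modulo $m$ (with $|r|_1=1$). $S_k(x):=1+x+\cdots+x^{k-1}$, $S_0:=0$. For $m\ge1$ with $\gcd(r,m)=1$, $\kappa(m,r,t):=\dfrac{m|r|_m}{\gcd(m,\,tS_{|r|_m}(r))}$. For $d\in\{1,3,p,3p\}$, $\Lambda(d,r,t):=\{\ell>0:\ \ell \text{ divides } \frac{|r|_{3p}}{\gcd(\kappa(d,r,t),|r|_{3p})}\text{ and }\gcd(r^{\ell\kappa(d,r,t)}-1,3p)=d\}$, and $\mathcal{S}(d,r,t):=\sum_{\ell\in\Lambda(d,r,t)} d\,\phi\!\left(\frac{|r|_{3p}}{\ell\gcd(\kappa(d,r,t),|r|_{3p})}\right)$, with $\phi$ Euler's function. *)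

theory Defs
  imports "HOL-Number_Theory.Number_Theory"
begin

definition Ssum :: "nat \<Rightarrow> nat \<Rightarrow> nat" where
  "Ssum k x = (\<Sum>i<k. x ^ i)"

definition kappa :: "nat \<Rightarrow> nat \<Rightarrow> nat \<Rightarrow> nat" where
  "kappa m r t = (m * ord m r) div gcd m (t * Ssum (ord m r) r)"

definition Lam :: "nat \<Rightarrow> nat \<Rightarrow> nat \<Rightarrow> nat \<Rightarrow> nat set" where
  "Lam p d r t = {l. l > 0 \<and>
      l dvd (ord (3*p) r div gcd (kappa d r t) (ord (3*p) r)) \<and>
      gcd (r ^ (l * kappa d r t) - 1) (3*p) = d}"

definition calS :: "nat \<Rightarrow> nat \<Rightarrow> nat \<Rightarrow> nat \<Rightarrow> nat" where
  "calS p d r t = (\<Sum>l\<in>Lam p d r t.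
      d * totient (ord (3*p) r div (l * gcd (kappa d r t) (ord (3*p) r))))"

end

theory Submission
  imports Defs
begin

text \<open>Write \<open>N = |r|\<^sub>3\<^sub>p / gcd(\<kappa>(3,r,t), |r|\<^sub>3\<^sub>p)\<close>. The condition
  \<open>gcd(r\<^sup>\<ell>\<^sup>\<kappa> - 1, 3p) = 3\<close> says that \<open>|r|\<^sub>3\<close> divides \<open>\<ell>\<kappa>\<close> but \<open>|r|\<^sub>p\<close> does not.
  Since \<open>|r|\<^sub>3\<close> always divides \<open>\<kappa>(3,r,t)\<close> and \<open>|r|\<^sub>3\<^sub>p = lcm(|r|\<^sub>3, |r|\<^sub>p)\<close>, the second
  condition is equivalent to \<open>N \<nmid> \<ell>\<close>, so \<open>\<Lambda>(3,r,t)\<close> is the set of proper divisors of \<open>N\<close>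
  and Gauss's identity \<open>\<Sum>\<^sub>d\<^sub>|\<^sub>N \<phi>(d) = N\<close> gives \<open>S(3,r,t) = 3(N - 1)\<close>. Finally
  \<open>\<kappa>(3,r,t)\<close> is \<open>1\<close> or \<open>3\<close> for \<open>r \<equiv> 1 (mod 3)\<close>, according as \<open>3 | t\<close> or not, and \<open>2\<close> for
  \<open>r \<equiv> 2 (mod 3)\<close>, which makes \<open>N\<close> equal to \<open>|r|\<^sub>p\<close>, \<open>|r|\<^sub>p/3\<close> or \<open>|r|\<^sub>p/2\<close>.\<close>

lemma dvd_mult_iff_div_gcd_dvd:
  fixes m k l :: nat
  assumes "m > 0"
  shows "m dvd l * k \<longleftrightarrow> m div gcd k m dvd l"
proof -
  define g where "g = gcd k m"
  have g0: "g > 0" using assms by (simp add: g_def)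
  have m: "m = g * (m div g)" and k: "k = g * (k div g)" by (simp_all add: g_def)
  have cop: "coprime (m div g) (k div g)"
    using div_gcd_coprime[of m k] assms by (simp add: g_def gcd.commute)
  have "m dvd l * k \<longleftrightarrow> g * (m div g) dvd g * (l * (k div g))"
    using m k by (metis mult.left_commute)
  also have "\<dots> \<longleftrightarrow> m div g dvd l * (k div g)" using g0 by simp
  also have "\<dots> \<longleftrightarrow> m div g dvd l" using cop by (simp add: coprime_dvd_mult_left_iff)
  finally show ?thesis by (simp add: g_def)
qed

lemma gcd_prime_mult_eq_iff:
  fixes a b n :: nat
  assumes "prime a" "prime b" "a \<noteq> b"
  shows "gcd n (a * b) = a \<longleftrightarrow> a dvd n \<and> \<not> b dvd n"
proof (cases "b dvd n")
  case True
  then have "b dvd gcd n (a * b)" by simp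
  moreover have "\<not> b dvd a" using assms primes_dvd_imp_eq by blast
  ultimately show ?thesis using True by metis
next
  case False
  then have "coprime n b" using assms(2) by (metis prime_imp_coprime coprime_commute)
  then have "gcd n (a * b) = gcd n a" by (rule gcd_mult_right_right_cancel)
  then have "gcd n (a * b) = a \<longleftrightarrow> a dvd n" by (metis gcd_dvd1 gcd_nat.absorb2)
  then show ?thesis using False by simp
qed

lemma totient_sum_proper_divisors:
  fixes N :: nat
  assumes "N > 0"
  shows "(\<Sum>l | 0 < l \<and> l dvd N \<and> l \<noteq> N. totient (N div l)) = N - 1"
proof -
  have "(\<Sum>l | l dvd N. totient (N div l)) = (\<Sum>d | d dvd N. totient d)"
    by (rule sum.reindex_bij_witness[where i="\<lambda>d. N div d" and j="\<lambda>d. N div d"])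
       (auto simp: assms dvd_div_eq_mult div_div_eq_right intro: dvd_div_mult_self)
  also have "\<dots> = N" by (rule totient_divisor_sum)
  finally have all: "(\<Sum>l | l dvd N. totient (N div l)) = N" .
  have split: "{l. l dvd N} = insert N {l. 0 < l \<and> l dvd N \<and> l \<noteq> N}"
    using assms by auto
  have "(\<Sum>l | l dvd N. totient (N div l)) =
      totient 1 + (\<Sum>l | 0 < l \<and> l dvd N \<and> l \<noteq> N. totient (N div l))"
    unfolding split using assms by (subst sum.insert) (auto intro: finite_subset[of _ "{l. l dvd N}"])
  then show ?thesis using all by simp
qed

lemma mod_3_cases_if_coprime:
  fixes r :: nat
  assumes "coprime r 3"
  shows "r mod 3 = 1 \<or> r mod 3 = 2"
proof -
  have "\<not> 3 dvd r"
  proof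
    assume "3 dvd r"
    then have "is_unit (3::nat)" by (rule coprime_common_divisor[OF assms _ dvd_refl])
    then show False by simp
  qed
  then show ?thesis by presburger
qed

lemma ord_3_eq:
  fixes r :: nat
  assumes "coprime r 3"
  shows "ord 3 r = (if r mod 3 = 1 then 1 else 2)"
proof (cases "r mod 3 = 1")
  case True
  then show ?thesis by (simp add: ord_eq_Suc_0_iff cong_def)
next
  case False
  then have r2: "r mod 3 = 2" using mod_3_cases_if_coprime[OF assms] by simp
  have "r\<^sup>2 mod 3 = (r mod 3)\<^sup>2 mod 3" by (simp add: power_mod)
  then have "[r\<^sup>2 = 1] (mod 3)" using r2 by (simp add: cong_def)
  moreover have "[r \<noteq> 1] (mod 3)" using r2 by (simp add: cong_def)
  ultimately show ?thesis using False by (simp add: ord_eq_2_iff)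
qed

lemma kappa_3_eq:
  fixes r t :: nat
  assumes "coprime r 3"
  shows "kappa 3 r t = (if r mod 3 = 1 then 3 div gcd 3 t else 2)"
proof (cases "r mod 3 = 1")
  case True
  then show ?thesis using ord_3_eq[OF assms] by (simp add: kappa_def Ssum_def)
next
  case False
  then have "3 dvd 1 + r" using mod_3_cases_if_coprime[OF assms] by presburger
  then have "3 dvd t * (1 + r)" by (rule dvd_mult)
  then have "gcd 3 (t * (1 + r)) = 3" by (rule gcd_nat.absorb1)
  then show ?thesis using False ord_3_eq[OF assms] by (simp add: kappa_def Ssum_def numeral_2_eq_2)
qed

lemma Lam_3_eq_proper_divisors:
  fixes p r t :: nat
  assumes "prime p" "p > 3" "coprime r (3 * p)"
  defines "N \<equiv> ord (3 * p) r div gcd (kappa 3 r t) (ord (3 * p) r)"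
  shows "Lam p 3 r t = {l. 0 < l \<and> l dvd N \<and> l \<noteq> N}"
proof -
  have p3: "prime (3::nat)" by simp
  have cop3: "coprime r 3" using assms(3) by auto
  have "r \<noteq> 0" using assms(2,3) by (cases r) auto
  have gcd_eq_3: "gcd (r ^ x - 1) (3 * p) = 3 \<longleftrightarrow> ord 3 r dvd x \<and> \<not> ord p r dvd x" for x
  proof -
    have "n dvd r ^ x - 1 \<longleftrightarrow> ord n r dvd x" for n
      using \<open>r \<noteq> 0\<close> by (simp add: cong_altdef_nat[symmetric] ord_divides')
    then show ?thesis using gcd_prime_mult_eq_iff[OF p3 assms(1)] assms(2) by simp
  qed
  have ord_3_dvd: "ord 3 r dvd kappa 3 r t"
    using ord_3_eq[OF cop3] kappa_3_eq[OF cop3] by simp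
  have "coprime 3 p" using assms(1,2) p3 by (intro primes_coprime) auto
  then have ord_lcm: "ord (3 * p) r = lcm (ord 3 r) (ord p r)"
    by (simp add: ord_modulus_mult_coprime)
  have "ord (3 * p) r > 0" using assms(3) by (simp add: coprime_commute)
  have ord_p_dvd: "ord p r dvd l * kappa 3 r t \<longleftrightarrow> N dvd l" for l
  proof -
    have "ord p r dvd l * kappa 3 r t \<longleftrightarrow> ord (3 * p) r dvd l * kappa 3 r t"
      using ord_3_dvd by (simp add: ord_lcm)
    also have "\<dots> \<longleftrightarrow> N dvd l"
      unfolding N_def using \<open>ord (3 * p) r > 0\<close> by (rule dvd_mult_iff_div_gcd_dvd)
    finally show ?thesis .
  qed
  have "l dvd N \<Longrightarrow> N dvd l \<longleftrightarrow> l = N" for l by (auto intro: dvd_antisym)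
  then show ?thesis
    unfolding Lam_def gcd_eq_3 ord_p_dvd using ord_3_dvd N_def by auto
qed

lemma calS_3_eq:
  fixes p r t :: nat
  assumes "prime p" "p > 3" "coprime r (3 * p)"
  defines "N \<equiv> ord (3 * p) r div gcd (kappa 3 r t) (ord (3 * p) r)"
  shows "calS p 3 r t = 3 * (N - 1)"
proof -
  have "ord (3 * p) r > 0" using assms(3) by (simp add: coprime_commute)
  then have "N > 0" unfolding N_def by (simp add: div_greater_zero_iff)
  have "a div (l * b) = a div b div l" for a l b :: nat
    by (metis div_mult2_eq mult.commute)
  then have "calS p 3 r t = (\<Sum>l\<in>Lam p 3 r t. 3 * totient (N div l))"
    unfolding calS_def N_def by simp
  also have "\<dots> = 3 * (N - 1)"
    using Lam_3_eq_proper_divisors[OF assms(1-3)] totient_sum_proper_divisors[OF \<open>N > 0\<close>]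
    by (simp add: N_def sum_distrib_left[symmetric])
  finally show ?thesis .
qed

lemma ord_div_gcd_kappa_3_eq:
  fixes p r t :: nat
  assumes "prime p" "p > 3" "coprime r (3 * p)" "t \<in> {1, 3, p, 3 * p}"
  shows "ord (3 * p) r div gcd (kappa 3 r t) (ord (3 * p) r) =
    (if r mod 3 = 1 \<and> t \<in> {3, 3 * p} then ord p r
     else if r mod 3 = 1 \<and> \<not> 3 dvd ord p r then ord p r
     else if r mod 3 = 1 then ord p r div 3
     else if odd (ord p r) then ord p r
     else ord p r div 2)"
proof -
  define q where "q = ord p r"
  have cop3: "coprime r 3" using assms(3) by simp
  have "prime (3::nat)" by simp
  then have "coprime 3 p" using assms(1,2) by (intro primes_coprime) auto
  then have ord_lcm: "ord (3 * p) r = lcm (ord 3 r) q"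
    by (simp add: ord_modulus_mult_coprime q_def)
  consider "r mod 3 = 1" "t \<in> {3, 3 * p}" | "r mod 3 = 1" "t \<in> {1, p}" | "r mod 3 = 2"
    using assms(4) mod_3_cases_if_coprime[OF cop3] by auto
  then show ?thesis
  proof cases
    case 1
    then have "kappa 3 r t = 1" using assms(2) kappa_3_eq[OF cop3] by auto
    then show ?thesis using 1 ord_lcm ord_3_eq[OF cop3] by (simp add: q_def)
  next
    case 2
    then have "coprime 3 t" using \<open>coprime 3 p\<close> by auto
    then have "kappa 3 r t = 3" using 2 kappa_3_eq[OF cop3] by simp
    moreover have "gcd 3 q = (if 3 dvd q then 3 else 1)"
      using \<open>prime 3\<close> by (simp add: gcd_nat.absorb1 prime_imp_coprime)
    moreover have "t \<notin> {3, 3 * p}" using 2 assms(2) by auto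
    ultimately show ?thesis using 2 ord_lcm ord_3_eq[OF cop3] by (simp add: q_def)
  next
    case 3
    then have "kappa 3 r t = 2" using kappa_3_eq[OF cop3] by simp
    moreover have "ord (3 * p) r = (if odd q then 2 * q else q)"
      using 3 ord_lcm ord_3_eq[OF cop3] by (auto simp: lcm_nat_def)
    ultimately show ?thesis using 3 by (simp add: q_def)
  qed
qed

theorem lemma5p9:
  fixes p r t :: nat
  assumes "prime p" and "p > 3"
    and "t \<in> {1, 3, p, 3*p}"
    and "1 \<le> r" and "r \<le> 3*p - 1" and "coprime r (3*p)"
  shows "int (calS p 3 r t) =
    (if r mod 3 = 1 \<and> t \<in> {3, 3*p} then 3 * (int (ord p r) - 1)
     else if r mod 3 = 1 \<and> t \<in> {1, p} \<and> \<not> 3 dvd ord p r then 3 * (int (ord p r) - 1)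
     else if r mod 3 = 1 \<and> t \<in> {1, p} \<and> 3 dvd ord p r then int (ord p r) - 3
     else if r mod 3 = 2 \<and> odd (ord p r) then 3 * (int (ord p r) - 1)
     else 3 * (int (ord p r) div 2 - 1))"
proof -
  define q where "q = ord p r"
  have "q > 0" using assms(6) by (simp add: q_def coprime_commute)
  have "coprime r 3" using assms(6) by simp
  then have r_mod_3: "r mod 3 = 1 \<or> r mod 3 = 2" by (rule mod_3_cases_if_coprime)
  have "calS p 3 r t =
    3 * ((if r mod 3 = 1 \<and> t \<in> {3, 3 * p} then q
          else if r mod 3 = 1 \<and> \<not> 3 dvd q then q
          else if r mod 3 = 1 then q div 3
          else if odd q then q
          else q div 2) - 1)"
    using calS_3_eq[OF assms(1,2,6)] ord_div_gcd_kappa_3_eq[OF assms(1,2,6,3)]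
    by (simp add: q_def)
  then show ?thesis
    using \<open>q > 0\<close> r_mod_3 assms(3) by (auto simp: q_def[symmetric] elim!: evenE)
qed

end
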